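(* Let $k\ge2$ be an integer, and let $G$ be a graph whose anticonnected components have size less than $|G|/k$. Then there is a complete $(k,|G|/k^2)$-blockade in $G$.
   Context: Graphs are finite and simple; $|G|$ is the number of vertices of $G$ and $\overline G$ its complement. $G$ is anticonnected if $\overline G$ is connected; an induced subgraph $F$ of $G$ is an anticonnected component of $G$ if $\overline F$ is a connected component of $\overline G$. A blockade in $G$ is a sequence $(B_1,\ldots,B_m)$ of disjoint subsets of $V(G)$, with length $m$ and width $\min_i|B_i|$; a $(k,w)$-blockade has length at least $k$ and width at least $w$. A blockade is complete in $G$ if for all distinct $i,j$, every vertex of $B_i$ is adjacent to every vertex of $B_j$. *)

theory Defs
  imports Complex_Main
begin

definition simple_graph :: "'a set \<Rightarrow> ('a \<Rightarrow> 'a \<Rightarrow> bool) \<Rightarrow> bool" where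
  "simple_graph V E \<longleftrightarrow> finite V \<and> (\<forall>x y. E x y \<longrightarrow> E y x)
     \<and> (\<forall>x. \<not> E x x) \<and> (\<forall>x y. E x y \<longrightarrow> x \<in> V \<and> y \<in> V)"

definition anti_adj :: "'a set \<Rightarrow> ('a \<Rightarrow> 'a \<Rightarrow> bool) \<Rightarrow> 'a \<Rightarrow> 'a \<Rightarrow> bool" where
  "anti_adj V E x y \<longleftrightarrow> x \<in> V \<and> y \<in> V \<and> x \<noteq> y \<and> \<not> E x y"

definition anticomponent :: "'a set \<Rightarrow> ('a \<Rightarrow> 'a \<Rightarrow> bool) \<Rightarrow> 'a \<Rightarrow> 'a set" where
  "anticomponent V E v = {u. (anti_adj V E)\<^sup>*\<^sup>* v u}"

definition anticomponents :: "'a set \<Rightarrow> ('a \<Rightarrow> 'a \<Rightarrow> bool) \<Rightarrow> 'a set set" where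
  "anticomponents V E = anticomponent V E ` V"

definition blockade :: "'a set \<Rightarrow> 'a set list \<Rightarrow> bool" where
  "blockade V Bs \<longleftrightarrow> (\<forall>i < length Bs. Bs ! i \<subseteq> V)
     \<and> (\<forall>i < length Bs. \<forall>j < length Bs. i \<noteq> j \<longrightarrow> Bs ! i \<inter> Bs ! j = {})"

definition blockade_width :: "'a set list \<Rightarrow> nat" where
  "blockade_width Bs = Min (card ` set Bs)"

definition complete_blockade :: "('a \<Rightarrow> 'a \<Rightarrow> bool) \<Rightarrow> 'a set list \<Rightarrow> bool" where
  "complete_blockade E Bs \<longleftrightarrow> (\<forall>i < length Bs. \<forall>j < length Bs. i \<noteq> j \<longrightarrow>
     (\<forall>x \<in> Bs ! i. \<forall>y \<in> Bs ! j. E x y))"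

definition kw_blockade :: "'a set \<Rightarrow> 'a set list \<Rightarrow> nat \<Rightarrow> real \<Rightarrow> bool" where
  "kw_blockade V Bs k w \<longleftrightarrow> blockade V Bs \<and> length Bs \<ge> k \<and> real (blockade_width Bs) \<ge> w"

end

theory Submission
  imports Defs
begin

text \<open>Call a set of vertices anticlosed if it is a union of anticomponents. Two disjoint
  anticlosed sets are complete to each other, so it suffices to find \<open>k\<close> disjoint anticlosed
  sets of size at least \<open>|G|/k\<^sup>2\<close>. Every anticlosed set \<open>W\<close> with \<open>|W| \<ge> t\<close> contains an
  anticlosed set \<open>B\<close> with \<open>t \<le> |B| < 2t\<close> or \<open>B\<close> a single anticomponent: take a minimal
  anticlosed \<open>B\<close> of size at least \<open>t\<close>; splitting off one anticomponent leaves two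
  anticlosed parts of size less than \<open>t\<close> each. With \<open>t = |G|/k\<^sup>2\<close> and \<open>M = |G|/k \<ge> 2t\<close> all
  these blocks have fewer than \<open>M\<close> vertices, so removing them greedily from \<open>V(G)\<close> until
  fewer than \<open>t\<close> vertices are left produces at least \<open>k\<close> of them.\<close>

definition anticlosed :: "'a set \<Rightarrow> ('a \<Rightarrow> 'a \<Rightarrow> bool) \<Rightarrow> 'a set \<Rightarrow> bool" where
  "anticlosed V E W \<longleftrightarrow> W \<subseteq> V \<and> (\<forall>x\<in>W. \<forall>y. anti_adj V E x y \<longrightarrow> y \<in> W)"

lemma anticlosed_self: "anticlosed V E V"
  unfolding anticlosed_def anti_adj_def by auto

lemma anticomponent_subset_anticlosed:
  assumes "anticlosed V E W" "x \<in> W"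
  shows "anticomponent V E x \<subseteq> W"
proof
  fix u assume "u \<in> anticomponent V E x"
  then have "(anti_adj V E)\<^sup>*\<^sup>* x u" unfolding anticomponent_def by simp
  then show "u \<in> W"
    by (induction rule: rtranclp_induct) (use assms in \<open>auto simp: anticlosed_def\<close>)
qed

lemma anticlosed_anticomponent:
  assumes "x \<in> V"
  shows "anticlosed V E (anticomponent V E x)"
proof -
  have "u \<in> V" if "(anti_adj V E)\<^sup>*\<^sup>* x u" for u
    using that by (induction rule: rtranclp_induct) (use assms in \<open>auto simp: anti_adj_def\<close>)
  then show ?thesis
    unfolding anticlosed_def anticomponent_def by (auto intro: rtranclp.rtrancl_into_rtrancl)
qed

lemma anticlosed_Diff:
  assumes "simple_graph V E" "anticlosed V E W" "anticlosed V E B"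
  shows "anticlosed V E (W - B)"
  using assms unfolding anticlosed_def anti_adj_def simple_graph_def by blast

lemma adjacent_if_anticlosed_disjoint:
  assumes "anticlosed V E A" "anticlosed V E B" "A \<inter> B = {}" "x \<in> A" "y \<in> B"
  shows "E x y"
  using assms unfolding anticlosed_def anti_adj_def by blast

lemma finite_anticlosed: "simple_graph V E \<Longrightarrow> anticlosed V E W \<Longrightarrow> finite W"
  unfolding simple_graph_def anticlosed_def by (auto intro: finite_subset)

lemma card_eq_card_add_card_Diff: "finite A \<Longrightarrow> B \<subseteq> A \<Longrightarrow> card A = card B + card (A - B)"
  by (metis card_Diff_subset card_mono finite_subset le_add_diff_inverse)

lemma blockade_Cons: "blockade (W - B) Bs \<Longrightarrow> B \<subseteq> W \<Longrightarrow> blockade W (B # Bs)"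
  unfolding blockade_def by (auto simp: nth_Cons less_Suc_eq_0_disj split: nat.splits)

lemma blockade_take: "blockade V Bs \<Longrightarrow> blockade V (take k Bs)"
  unfolding blockade_def by simp

lemma blockade_width_ge:
  assumes "Bs \<noteq> []" "\<forall>B \<in> set Bs. w \<le> real (card B)"
  shows "w \<le> real (blockade_width Bs)"
proof -
  have "blockade_width Bs \<in> card ` set Bs"
    unfolding blockade_width_def using assms(1) by (intro Min_in) auto
  then show ?thesis using assms(2) by auto
qed

lemma kw_blockade_replicate_empty:
  "kw_blockade V (replicate k {}) k 0 \<and> complete_blockade E (replicate k {})"
  unfolding kw_blockade_def blockade_def complete_blockade_def blockade_width_def
  by auto

lemma complete_blockade_if_anticlosed:
  assumes "blockade V Bs" "\<forall>B \<in> set Bs. anticlosed V E B"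
  shows "complete_blockade E Bs"
  using assms adjacent_if_anticlosed_disjoint
  unfolding complete_blockade_def blockade_def by (metis nth_mem)

lemma kw_blockade_take_anticlosed:
  assumes "blockade V Bs" "\<forall>B \<in> set Bs. anticlosed V E B \<and> w \<le> real (card B)"
    and "1 \<le> k" "k \<le> length Bs"
  shows "kw_blockade V (take k Bs) k w \<and> complete_blockade E (take k Bs)"
proof -
  have Cs: "blockade V (take k Bs)" "\<forall>B \<in> set (take k Bs). anticlosed V E B \<and> w \<le> real (card B)"
    using blockade_take[OF assms(1)] assms(2) in_set_takeD by fast+
  have "take k Bs \<noteq> []" using assms(3,4) by auto
  then have "w \<le> real (blockade_width (take k Bs))"
    using blockade_width_ge Cs(2) by blast
  moreover have "complete_blockade E (take k Bs)"
    using complete_blockade_if_anticlosed Cs by blast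
  ultimately show ?thesis
    using Cs(1) assms(4) unfolding kw_blockade_def by auto
qed

context
  fixes V :: "'a set" and E :: "'a \<Rightarrow> 'a \<Rightarrow> bool" and t M :: real
  assumes G: "simple_graph V E" and t: "t > 0" "2 * t \<le> M"
    and small: "\<forall>x\<in>V. real (card (anticomponent V E x)) < M"
begin

lemma anticlosed_block_exists:
  "anticlosed V E W \<Longrightarrow> t \<le> real (card W) \<Longrightarrow>
    \<exists>B \<subseteq> W. anticlosed V E B \<and> t \<le> real (card B) \<and> real (card B) < M"
proof (induction "card W" arbitrary: W rule: less_induct)
  case less
  have "finite W" using finite_anticlosed[OF G less.prems(1)] .
  from less.prems t obtain x where x: "x \<in> W" by fastforce
  define C where "C = anticomponent V E x"
  have xV: "x \<in> V" using x less.prems(1) unfolding anticlosed_def by auto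
  have "C \<subseteq> W" unfolding C_def using anticomponent_subset_anticlosed[OF less.prems(1) x] .
  have C: "anticlosed V E C" unfolding C_def using anticlosed_anticomponent[OF xV] .
  have D: "anticlosed V E (W - C)" using anticlosed_Diff[OF G less.prems(1) C] .
  show ?case
  proof (cases "C = W")
    case True
    then show ?thesis using less.prems small xV unfolding C_def by auto
  next
    case False
    have "x \<in> C" unfolding C_def anticomponent_def by simp
    then have smaller: "card C < card W" "card (W - C) < card W"
      using \<open>finite W\<close> \<open>C \<subseteq> W\<close> False x by (auto intro: psubset_card_mono)
    consider "t \<le> real (card C)" | "t \<le> real (card (W - C))"
      | "real (card C) < t" "real (card (W - C)) < t" by linarith
    then show ?thesis
    proof cases
      case 1
      then show ?thesis using less.hyps[OF smaller(1) C] \<open>C \<subseteq> W\<close> by blast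
    next
      case 2
      then show ?thesis using less.hyps[OF smaller(2) D] by blast
    next
      case 3
      have "card W = card C + card (W - C)"
        using card_eq_card_add_card_Diff[OF \<open>finite W\<close> \<open>C \<subseteq> W\<close>] .
      then show ?thesis using 3 t less.prems by auto
    qed
  qed
qed

lemma anticlosed_blockade_exists:
  "anticlosed V E W \<Longrightarrow> \<exists>Bs. blockade W Bs \<and> (\<forall>B \<in> set Bs. anticlosed V E B \<and> t \<le> real (card B))
    \<and> real (card W) < (real (length Bs) + 1) * M"
proof (induction "card W" arbitrary: W rule: less_induct)
  case less
  show ?case
  proof (cases "real (card W) < t")
    case True
    then show ?thesis using t by (intro exI[of _ "[]"]) (auto simp: blockade_def)
  next
    case False
    then obtain B where B: "B \<subseteq> W" "anticlosed V E B" "t \<le> real (card B)" "real (card B) < M"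
      using anticlosed_block_exists[OF less.prems] by force
    have "finite W" using finite_anticlosed[OF G less.prems] .
    have "B \<noteq> {}" using B(3) t by auto
    then have "card (W - B) < card W"
      using \<open>finite W\<close> B(1) by (intro psubset_card_mono) auto
    then obtain Bs where Bs: "blockade (W - B) Bs" "\<forall>B \<in> set Bs. anticlosed V E B \<and> t \<le> real (card B)"
        "real (card (W - B)) < (real (length Bs) + 1) * M"
      using less.hyps anticlosed_Diff[OF G less.prems B(2)] by blast
    have "card W = card B + card (W - B)"
      using card_eq_card_add_card_Diff[OF \<open>finite W\<close> B(1)] .
    then have "real (card W) < (real (length (B # Bs)) + 1) * M"
      using B(4) Bs(3) by (simp add: algebra_simps)
    then show ?thesis
      using blockade_Cons[OF Bs(1) B(1)] B Bs(2) by (intro exI[of _ "B # Bs"]) auto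
  qed
qed

end

theorem lemma4p1:
  fixes V :: "'a set" and E :: "'a \<Rightarrow> 'a \<Rightarrow> bool" and k :: nat
  assumes "simple_graph V E"
    and "k \<ge> 2"
    and "\<forall>C \<in> anticomponents V E. real (card C) < real (card V) / real k"
  shows "\<exists>Bs. kw_blockade V Bs k (real (card V) / real k ^ 2) \<and> complete_blockade E Bs"
proof (cases "card V = 0")
  case True
  then show ?thesis using kw_blockade_replicate_empty by auto
next
  case False
  define n where "n = real (card V)"
  have n: "n > 0" and k: "real k \<ge> 2" using False assms(2) unfolding n_def by auto
  have t: "n / real k ^ 2 > 0" using n k by simp
  have "2 * (n / real k ^ 2) \<le> n / real k"
    using n k by (simp add: power2_eq_square field_simps mult_right_mono)
  moreover have "\<forall>x\<in>V. real (card (anticomponent V E x)) < n / real k"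
    using assms(3) unfolding anticomponents_def n_def by auto
  ultimately obtain Bs where Bs: "blockade V Bs" "\<forall>B \<in> set Bs. anticlosed V E B \<and> n / real k ^ 2 \<le> real (card B)"
      "n < (real (length Bs) + 1) * (n / real k)"
    using anticlosed_blockade_exists[OF assms(1) t _ _ anticlosed_self] unfolding n_def by blast
  have "n * real k < n * (real (length Bs) + 1)"
    using Bs(3) n k by (simp add: field_simps)
  then have "k \<le> length Bs" using n by simp
  then have "kw_blockade V (take k Bs) k (n / real k ^ 2) \<and> complete_blockade E (take k Bs)"
    using kw_blockade_take_anticlosed[OF Bs(1,2)] assms(2) by simp
  then show ?thesis unfolding n_def by blast
qed

end
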